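(* Let $1\le p<\infty$ and let $f$ be a continuous real function on $[0,1]$. Then there are constants $0<c_1\le c_2$, independent of $f$ and $t$, such that for all $0<t\le 1$, $$c_1\, t\,\upsilon_p\big([t^{-1}]^p,f\big)\le K(f,t;L^\infty,BV_p)\le c_2\, t\,\upsilon_p\big([t^{-1}]^p,f\big),$$ where $[x]$ denotes the integer part of $x$.
   Context: For a function $f$ on $[0,1]$ and a positive integer $n$, the modulus of $p$-variation is $\upsilon_p(n,f)=\sup\big(\sum_{j=1}^n|f(I_j)|^p\big)^{1/p}$, the supremum over all collections $\{I_j\}_{j=1}^n$ of nonoverlapping subintervals of $[0,1]$, where $f(I)=f(\sup I)-f(\inf I)$. The $p$-variation is $\mathrm{Var}_p(g)=\sup\big(\sum_j|g(I_j)|^p\big)^{1/p}$, the supremum over all finite collections of nonoverlapping subintervals of $[0,1]$, and $BV_p$ is the space of functions on $[0,1]$ with $\mathrm{Var}_p(g)<\infty$. The $K$-functional is $K(f,t;L^\infty,BV_p)=\inf_{g\in BV_p}\big(\|f-g\|_{L^\infty}+t\,\mathrm{Var}_p(g)\big)$. *)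

theory Defs
  imports "HOL-Analysis.Analysis"
begin

definition nonoverlapping_family :: "nat \<Rightarrow> (nat \<Rightarrow> real) \<Rightarrow> (nat \<Rightarrow> real) \<Rightarrow> bool" where
  "nonoverlapping_family n a b \<longleftrightarrow>
     (\<forall>j<n. 0 \<le> a j \<and> a j \<le> b j \<and> b j \<le> 1) \<and>
     (\<forall>i<n. \<forall>j<n. i \<noteq> j \<longrightarrow> b i \<le> a j \<or> b j \<le> a i)"

definition psums :: "real \<Rightarrow> nat \<Rightarrow> (real \<Rightarrow> real) \<Rightarrow> real set" where
  "psums p n f = {(\<Sum>j<n. \<bar>f (b j) - f (a j)\<bar> powr p) | a b. nonoverlapping_family n a b}"

definition modulus_pvar :: "real \<Rightarrow> nat \<Rightarrow> (real \<Rightarrow> real) \<Rightarrow> real" where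
  "modulus_pvar p n f = (Sup (psums p n f)) powr (1 / p)"

definition BVp :: "real \<Rightarrow> (real \<Rightarrow> real) set" where
  "BVp p = {g. bdd_above (\<Union>n. psums p n g)}"

text \<open>p-variation Var_p(g) (meaningful for g in BV_p).\<close>
definition pvar :: "real \<Rightarrow> (real \<Rightarrow> real) \<Rightarrow> real" where
  "pvar p g = (Sup (\<Union>n. psums p n g)) powr (1 / p)"

definition Linf_norm :: "(real \<Rightarrow> real) \<Rightarrow> real" where
  "Linf_norm h = Inf {M. 0 \<le> M \<and> (AE x in lebesgue. x \<in> {0..1} \<longrightarrow> \<bar>h x\<bar> \<le> M)}"

definition K_func :: "real \<Rightarrow> (real \<Rightarrow> real) \<Rightarrow> real \<Rightarrow> real" where
  "K_func p f t = Inf {Linf_norm (\<lambda>x. f x - g x) + t * pvar p g | g. g \<in> BVp p}"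

end

theory Submission
  imports Defs
begin

text \<open>
  Write \<open>V\<close> for \<open>\<upsilon>\<^sub>p(n,f)\<close> with \<open>n = [[1/t]\<^sup>p]\<close>, so that \<open>n\<^bsup>1/p\<^esup>\<close> is comparable to \<open>1/t\<close>.

  Lower bound: if \<open>g \<in> BV\<^sub>p\<close> and \<open>L = \<parallel>f - g\<parallel>\<^sub>\<infinity>\<close>, then \<open>|f - g| \<le> L\<close> on a dense set, and by
  continuity of \<open>f\<close> every p-sum of \<open>f\<close> over \<open>n\<close> intervals is at most
  \<open>2\<^sup>p (Var\<^sub>p(g)\<^sup>p + n (2L)\<^sup>p)\<close>. Hence \<open>V \<le> 4 Var\<^sub>p(g) + 8 n\<^bsup>1/p\<^esup> L\<close>, and \<open>t n\<^bsup>1/p\<^esup> \<le> 1\<close>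
  gives \<open>t V \<le> 8 K(f,t)\<close>.

  Upper bound: scan \<open>[0,1]\<close> greedily from \<open>0\<close>, each time moving to the first point where
  \<open>f\<close> has changed by \<open>d\<close>. If \<open>n d\<^sup>p > V\<^sup>p\<close>, fewer than \<open>n\<close> moves are possible, and the step
  function interpolating \<open>f\<close> at the visited points is \<open>d\<close>-close to \<open>f\<close>, while each of its
  p-sums is a p-sum of \<open>f\<close> over at most \<open>n\<close> intervals, so its p-variation is at most \<open>V\<close>.
  Since \<open>4 t n\<^bsup>1/p\<^esup> \<ge> 1\<close>, any \<open>d > 8 t V\<close> works, giving \<open>K(f,t) \<le> 9 t V\<close>.
\<close>

section \<open>Families of intervals and p-sums\<close>

lemma powr_add_le_two_powr:
  fixes A B p :: real
  assumes "0 \<le> A" "0 \<le> B" "0 \<le> p"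
  shows "(A + B) powr p \<le> 2 powr p * (A powr p + B powr p)"
proof -
  have "(A + B) powr p \<le> (2 * max A B) powr p"
    using assms by (intro powr_mono2) auto
  also have "\<dots> = 2 powr p * max A B powr p"
    using assms by (simp add: powr_mult)
  also have "\<dots> \<le> 2 powr p * (A powr p + B powr p)"
    using assms by (intro mult_left_mono) (auto simp: max_def)
  finally show ?thesis .
qed

lemma powr_one_div_add_le:
  fixes X Y p :: real
  assumes "0 \<le> X" "0 \<le> Y" "1 \<le> p"
  shows "(X + Y) powr (1/p) \<le> 2 * (X powr (1/p) + Y powr (1/p))"
proof -
  have "(X + Y) powr (1/p) \<le> 2 powr (1/p) * (X powr (1/p) + Y powr (1/p))"
    using assms by (intro powr_add_le_two_powr) auto
  also have "\<dots> \<le> 2 powr 1 * (X powr (1/p) + Y powr (1/p))"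
    using assms by (intro mult_right_mono powr_mono) auto
  finally show ?thesis by simp
qed

lemma continuous_on_unit_interval_bounded:
  fixes f :: "real \<Rightarrow> real"
  assumes "continuous_on {0..1} f"
  obtains M where "\<And>x. x \<in> {0..1} \<Longrightarrow> \<bar>f x\<bar> \<le> M"
  using compact_imp_bounded[OF compact_continuous_image[OF assms compact_Icc]]
  unfolding bounded_real by blast

lemma mono_on_atMost_if_le_Suc:
  fixes X :: "nat \<Rightarrow> real"
  assumes "\<And>k. k < K \<Longrightarrow> X k \<le> X (Suc k)"
  shows "mono_on {..K} X"
proof (rule mono_onI)
  fix i j assume "i \<in> {..K}" "j \<in> {..K}" "i \<le> j"
  from \<open>i \<le> j\<close> \<open>j \<in> {..K}\<close> show "X i \<le> X j"
  proof (induction j rule: dec_induct)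
    case (step k)
    then show ?case
      using assms[of k] by simp
  qed simp
qed

lemma nonoverlapping_family_chain:
  assumes "\<And>k. k < N \<Longrightarrow> 0 \<le> X k \<and> X k \<le> X (Suc k) \<and> X (Suc k) \<le> 1"
  shows "nonoverlapping_family N X (\<lambda>k. X (Suc k))"
proof -
  have mono: "mono_on {..N} X"
    using assms by (intro mono_on_atMost_if_le_Suc) auto
  have "X (Suc i) \<le> X j" if "i < j" "j < N" for i j
    using mono_onD[OF mono, of "Suc i" j] that by simp
  then have "X (Suc i) \<le> X j \<or> X (Suc j) \<le> X i" if "i < N" "j < N" "i \<noteq> j" for i j
    using that by (cases "i < j") auto
  then show ?thesis
    unfolding nonoverlapping_family_def using assms by simp
qed

lemma nonoverlapping_family_reindex:
  assumes "nonoverlapping_family n a b" "inj_on e {..<m}" "e ` {..<m} \<subseteq> {..<n}"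
  shows "nonoverlapping_family m (\<lambda>k. a (e k)) (\<lambda>k. b (e k))"
  unfolding nonoverlapping_family_def
proof (rule conjI; intro allI impI)
  fix j assume "j < m"
  then have "e j < n"
    using assms(3) by auto
  then show "0 \<le> a (e j) \<and> a (e j) \<le> b (e j) \<and> b (e j) \<le> 1"
    using assms(1) unfolding nonoverlapping_family_def by auto
next
  fix i j assume "i < m" "j < m" "i \<noteq> j"
  then have "e i \<noteq> e j"
    using inj_onD[OF assms(2), of i j] by auto
  moreover have "e i < n" "e j < n"
    using assms(3) \<open>i < m\<close> \<open>j < m\<close> by auto
  moreover have "\<forall>i<n. \<forall>j<n. i \<noteq> j \<longrightarrow> b i \<le> a j \<or> b j \<le> a i"
    using assms(1) unfolding nonoverlapping_family_def by blast
  ultimately show "b (e i) \<le> a (e j) \<or> b (e j) \<le> a (e i)"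
    by blast
qed

lemma nonoverlapping_family_mono_image:
  assumes ab: "nonoverlapping_family n a b"
    and into: "\<And>x. x \<in> {0..1} \<Longrightarrow> \<phi> x \<in> {0..1}"
    and mono: "mono_on (a ` {..<n} \<union> b ` {..<n}) \<phi>"
  shows "nonoverlapping_family n (\<lambda>j. \<phi> (a j)) (\<lambda>j. \<phi> (b j))"
  unfolding nonoverlapping_family_def
proof (rule conjI; intro allI impI)
  fix j assume "j < n"
  then have "a j \<in> {0..1}" "b j \<in> {0..1}" "a j \<le> b j"
    using ab unfolding nonoverlapping_family_def by auto
  moreover have "\<phi> (a j) \<le> \<phi> (b j)"
    using mono_onD[OF mono _ _ \<open>a j \<le> b j\<close>] \<open>j < n\<close> by blast
  ultimately show "0 \<le> \<phi> (a j) \<and> \<phi> (a j) \<le> \<phi> (b j) \<and> \<phi> (b j) \<le> 1"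
    using into by fastforce
next
  fix i j assume "i < n" "j < n" "i \<noteq> j"
  then have "b i \<le> a j \<or> b j \<le> a i"
    using ab unfolding nonoverlapping_family_def by blast
  then show "\<phi> (b i) \<le> \<phi> (a j) \<or> \<phi> (b j) \<le> \<phi> (a i)"
    using mono_onD[OF mono] \<open>i < n\<close> \<open>j < n\<close> by blast
qed

lemma psum_in_psums:
  assumes "nonoverlapping_family n a b"
  shows "(\<Sum>j<n. \<bar>f (b j) - f (a j)\<bar> powr p) \<in> psums p n f"
  unfolding psums_def mem_Collect_eq
  by (rule exI[of _ a], rule exI[of _ b]) (simp add: assms)

lemma zero_in_psums: "0 \<in> psums p n f"
proof -
  have "nonoverlapping_family n (\<lambda>_. 0) (\<lambda>_. 0)"
    by (simp add: nonoverlapping_family_def)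
  then show ?thesis
    using psum_in_psums[of n "\<lambda>_. 0" "\<lambda>_. 0" f p] by simp
qed

lemma bdd_above_psums:
  assumes "continuous_on {0..1} f" "0 \<le> p"
  shows "bdd_above (psums p n f)"
proof -
  obtain M where M: "\<And>x. x \<in> {0..1} \<Longrightarrow> \<bar>f x\<bar> \<le> M"
    using continuous_on_unit_interval_bounded[OF assms(1)] by blast
  have "s \<le> real n * (2 * M) powr p" if s_mem: "s \<in> psums p n f" for s
  proof -
    obtain a b where ab: "nonoverlapping_family n a b"
      and s: "s = (\<Sum>j<n. \<bar>f (b j) - f (a j)\<bar> powr p)"
      using s_mem unfolding psums_def by blast
    have "\<bar>f (b j) - f (a j)\<bar> powr p \<le> (2 * M) powr p" if "j < n" for j
    proof -
      have "a j \<in> {0..1}" "b j \<in> {0..1}"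
        using ab that unfolding nonoverlapping_family_def by auto
      then have "\<bar>f (b j) - f (a j)\<bar> \<le> 2 * M"
        using M[of "a j"] M[of "b j"] abs_triangle_ineq4[of "f (b j)" "f (a j)"] by linarith
      then show ?thesis
        using assms(2) by (intro powr_mono2) auto
    qed
    then have "s \<le> (\<Sum>j<n. (2 * M) powr p)"
      unfolding s by (intro sum_mono) simp
    then show ?thesis
      by simp
  qed
  then show ?thesis
    unfolding bdd_above_def by blast
qed

lemma psums_mono:
  assumes "m \<le> N"
  shows "psums p m f \<subseteq> psums p N f"
proof
  fix s assume "s \<in> psums p m f"
  then obtain a b where ab: "nonoverlapping_family m a b"
    and s: "s = (\<Sum>j<m. \<bar>f (b j) - f (a j)\<bar> powr p)"
    unfolding psums_def by blast
  define a' where "a' k = (if k < m then a k else 0)" for k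
  define b' where "b' k = (if k < m then b k else 0)" for k
  have "nonoverlapping_family N a' b'"
    using ab assms unfolding nonoverlapping_family_def a'_def b'_def by auto
  moreover have "s = (\<Sum>j<N. \<bar>f (b' j) - f (a' j)\<bar> powr p)"
  proof -
    have "(\<Sum>j<N. \<bar>f (b' j) - f (a' j)\<bar> powr p) = (\<Sum>j<m. \<bar>f (b' j) - f (a' j)\<bar> powr p)"
      using assms by (intro sum.mono_neutral_right) (auto simp: a'_def b'_def)
    also have "\<dots> = s"
      unfolding s a'_def b'_def by (intro sum.cong) auto
    finally show ?thesis ..
  qed
  ultimately show "s \<in> psums p N f"
    using psum_in_psums by simp
qed

lemma psum_subfamily_in_psums:
  assumes "nonoverlapping_family n a b" "J \<subseteq> {..<n}" "card J \<le> N"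
  shows "(\<Sum>j\<in>J. \<bar>f (b j) - f (a j)\<bar> powr p) \<in> psums p N f"
proof -
  have "finite J"
    using finite_subset[OF assms(2)] by simp
  then obtain e where e: "bij_betw e {..<card J} J"
    using finite_same_card_bij[OF finite_lessThan] by (metis card_lessThan)
  then have "inj_on e {..<card J}" "e ` {..<card J} \<subseteq> {..<n}"
    using assms(2) unfolding bij_betw_def by simp_all
  then have "nonoverlapping_family (card J) (\<lambda>k. a (e k)) (\<lambda>k. b (e k))"
    by (rule nonoverlapping_family_reindex[OF assms(1)])
  moreover have "(\<Sum>j\<in>J. \<bar>f (b j) - f (a j)\<bar> powr p) = (\<Sum>k<card J. \<bar>f (b (e k)) - f (a (e k))\<bar> powr p)"
    by (rule sum.reindex_bij_betw[OF e, symmetric])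
  ultimately have "(\<Sum>j\<in>J. \<bar>f (b j) - f (a j)\<bar> powr p) \<in> psums p (card J) f"
    using psum_in_psums[of "card J" _ _ f p] by simp
  then show ?thesis
    using psums_mono[OF assms(3)] by blast
qed

lemma const_in_BVp: "(\<lambda>_. c) \<in> BVp p"
  unfolding BVp_def psums_def mem_Collect_eq by (rule bdd_aboveI[of _ 0]) auto

lemma BVp_bounded:
  assumes "g \<in> BVp p" "0 < p"
  obtains M where "\<And>x. x \<in> {0..1} \<Longrightarrow> \<bar>g x\<bar> \<le> M"
proof -
  obtain B where B: "\<And>s. s \<in> (\<Union>n. psums p n g) \<Longrightarrow> s \<le> B"
    using assms(1) unfolding BVp_def bdd_above_def by blast
  have "\<bar>g x\<bar> \<le> \<bar>g 0\<bar> + B powr (1/p)" if "x \<in> {0..1}" for x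
  proof -
    have "nonoverlapping_family 1 (\<lambda>_. 0) (\<lambda>_. x)"
      using that unfolding nonoverlapping_family_def by auto
    then have "\<bar>g x - g 0\<bar> powr p \<in> psums p 1 g"
      using psum_in_psums[of 1 "\<lambda>_. 0" "\<lambda>_. x" g p] by simp
    then have "\<bar>g x - g 0\<bar> powr p \<le> B"
      using B by blast
    then have "(\<bar>g x - g 0\<bar> powr p) powr (1/p) \<le> B powr (1/p)"
      using assms(2) by (intro powr_mono2) auto
    then have "\<bar>g x - g 0\<bar> \<le> B powr (1/p)"
      using assms(2) by (simp add: powr_powr)
    then show ?thesis
      by linarith
  qed
  then show ?thesis
    using that by blast
qed

section \<open>The essential supremum on the unit interval\<close>

lemma Linf_norm_le:
  assumes "0 \<le> M" "\<And>x. x \<in> {0..1} \<Longrightarrow> \<bar>h x\<bar> \<le> M"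
  shows "Linf_norm h \<le> M"
  unfolding Linf_norm_def
proof (rule cInf_lower)
  show "M \<in> {M. 0 \<le> M \<and> (AE x in lebesgue. x \<in> {0..1} \<longrightarrow> \<bar>h x\<bar> \<le> M)}"
    using assms by (auto intro!: AE_I2)
  show "bdd_below {M. 0 \<le> M \<and> (AE x in lebesgue. x \<in> {0..1} \<longrightarrow> \<bar>h x\<bar> \<le> M)}"
    by (rule bdd_belowI[of _ 0]) simp
qed

lemma Linf_norm_nonneg:
  assumes "\<And>x. x \<in> {0..1} \<Longrightarrow> \<bar>h x\<bar> \<le> M"
  shows "0 \<le> Linf_norm h"
  unfolding Linf_norm_def
proof (rule cInf_greatest)
  have "0 \<le> M"
    using assms[of 0] by simp
  then show "{M. 0 \<le> M \<and> (AE x in lebesgue. x \<in> {0..1} \<longrightarrow> \<bar>h x\<bar> \<le> M)} \<noteq> {}"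
    using assms by (auto intro!: AE_I2)
qed simp

lemma AE_abs_le_Linf_norm:
  assumes "\<And>x. x \<in> {0..1} \<Longrightarrow> \<bar>h x\<bar> \<le> M"
  shows "AE x in lebesgue. x \<in> {0..1} \<longrightarrow> \<bar>h x\<bar> \<le> Linf_norm h"
proof -
  define S where "S = {M. 0 \<le> M \<and> (AE x in lebesgue. x \<in> {0..1} \<longrightarrow> \<bar>h x\<bar> \<le> M)}"
  have "0 \<le> M"
    using assms[of 0] by simp
  then have "S \<noteq> {}"
    using assms unfolding S_def by (auto intro!: AE_I2)
  have "AE x in lebesgue. x \<in> {0..1} \<longrightarrow> \<bar>h x\<bar> \<le> Inf S + inverse (real (Suc k))" for k
  proof -
    obtain M' where "M' \<in> S" and less: "M' < Inf S + inverse (real (Suc k))"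
      using cInf_lessD[OF \<open>S \<noteq> {}\<close>, of "Inf S + inverse (real (Suc k))"] by auto
    then have "AE x in lebesgue. x \<in> {0..1} \<longrightarrow> \<bar>h x\<bar> \<le> M'"
      unfolding S_def by blast
    then show ?thesis
      by eventually_elim (use less in auto)
  qed
  then have "AE x in lebesgue. \<forall>k. x \<in> {0..1} \<longrightarrow> \<bar>h x\<bar> \<le> Inf S + inverse (real (Suc k))"
    unfolding AE_all_countable by blast
  then show ?thesis
  proof (rule AE_mp, intro AE_I2 impI)
    fix x assume "\<forall>k. x \<in> {0..1} \<longrightarrow> \<bar>h x\<bar> \<le> Inf S + inverse (real (Suc k))" "x \<in> {0..1}"
    moreover have "(\<lambda>k. Inf S + inverse (real (Suc k))) \<longlonglongrightarrow> Inf S"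
      using tendsto_add[OF tendsto_const LIMSEQ_inverse_real_of_nat] by simp
    ultimately show "\<bar>h x\<bar> \<le> Linf_norm h"
      unfolding Linf_norm_def S_def[symmetric] by (intro LIMSEQ_le_const) auto
  qed
qed

lemma AE_on_unit_interval_exists_near:
  fixes x e :: real
  assumes "AE x in lebesgue. x \<in> {0..1} \<longrightarrow> P x" "x \<in> {0..1}" "0 < e"
  shows "\<exists>y\<in>{0..1}. \<bar>y - x\<bar> < e \<and> P y"
proof (rule ccontr)
  assume no_near: "\<not> ?thesis"
  define u where "u = max 0 (x - e/2)"
  define v where "v = min 1 (x + e/2)"
  have "u < v"
    using assms unfolding u_def v_def by auto
  have "AE y in lebesgue. y \<notin> {u<..<v}"
    using assms(1)
  proof (rule AE_mp, intro AE_I2 impI notI)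
    fix y assume "y \<in> {0..1} \<longrightarrow> P y" "y \<in> {u<..<v}"
    moreover have "y \<in> {0..1}" "\<bar>y - x\<bar> < e"
      using \<open>y \<in> {u<..<v}\<close> unfolding u_def v_def by auto
    ultimately show False
      using no_near by blast
  qed
  then have "AE y in lborel. y \<notin> {u<..<v}"
    by (simp add: AE_completion_iff)
  then have "emeasure lborel {u<..<v} = 0"
    by (subst (asm) AE_iff_measurable[of "{u<..<v}"]) auto
  then show False
    using \<open>u < v\<close> by simp
qed

lemma continuous_minus_BVp_bounded:
  assumes "continuous_on {0..1} f" "g \<in> BVp p" "0 < p"
  obtains M where "\<And>x. x \<in> {0..1} \<Longrightarrow> \<bar>f x - g x\<bar> \<le> M"
proof -
  obtain Mf where "\<And>x. x \<in> {0..1} \<Longrightarrow> \<bar>f x\<bar> \<le> Mf"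
    using continuous_on_unit_interval_bounded[OF assms(1)] by blast
  moreover obtain Mg where "\<And>x. x \<in> {0..1} \<Longrightarrow> \<bar>g x\<bar> \<le> Mg"
    using BVp_bounded[OF assms(2,3)] by blast
  ultimately have "\<bar>f x - g x\<bar> \<le> Mf + Mg" if "x \<in> {0..1}" for x
    using that abs_triangle_ineq4[of "f x" "g x"] by fastforce
  then show ?thesis
    using that by blast
qed

lemma K_func_le:
  assumes cont: "continuous_on {0..1} f" and "0 < p" "0 \<le> t" and g: "g \<in> BVp p"
  shows "K_func p f t \<le> Linf_norm (\<lambda>x. f x - g x) + t * pvar p g"
  unfolding K_func_def
proof (rule cInf_lower)
  show "Linf_norm (\<lambda>x. f x - g x) + t * pvar p g
      \<in> {Linf_norm (\<lambda>x. f x - h x) + t * pvar p h | h. h \<in> BVp p}"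
    using g by blast
  show "bdd_below {Linf_norm (\<lambda>x. f x - h x) + t * pvar p h | h. h \<in> BVp p}"
  proof (rule bdd_belowI[of _ 0], clarify)
    fix h assume h: "h \<in> BVp p"
    obtain M where "\<And>x. x \<in> {0..1} \<Longrightarrow> \<bar>f x - h x\<bar> \<le> M"
      using continuous_minus_BVp_bounded[OF cont h \<open>0 < p\<close>] by blast
    then have "0 \<le> Linf_norm (\<lambda>x. f x - h x)"
      by (rule Linf_norm_nonneg)
    moreover have "0 \<le> t * pvar p h"
      using \<open>0 \<le> t\<close> unfolding pvar_def by simp
    ultimately show "0 \<le> Linf_norm (\<lambda>x. f x - h x) + t * pvar p h"
      by simp
  qed
qed

section \<open>Lower bound\<close>

lemma eventually_nonoverlapping_family:
  fixes u :: "nat \<Rightarrow> real \<Rightarrow> real"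
  assumes ab: "nonoverlapping_family n a b"
    and u_unit: "\<And>k x. x \<in> {0..1} \<Longrightarrow> u k x \<in> {0..1}"
    and u_lim: "\<And>x. x \<in> {0..1} \<Longrightarrow> (\<lambda>k. u k x) \<longlonglongrightarrow> x"
  shows "eventually (\<lambda>k. nonoverlapping_family n (\<lambda>j. u k (a j)) (\<lambda>j. u k (b j))) sequentially"
proof -
  define E where "E = a ` {..<n} \<union> b ` {..<n}"
  have "finite E"
    unfolding E_def by simp
  have E: "E \<subseteq> {0..1}"
    using ab unfolding E_def nonoverlapping_family_def by auto
  have pairwise: "eventually (\<lambda>k. x \<le> y \<longrightarrow> u k x \<le> u k y) sequentially"
    if "x \<in> E" "y \<in> E" for x y
  proof (cases "x < y")
    case True
    have "x \<in> {0..1}" "y \<in> {0..1}" "x < (x + y) / 2" "(x + y) / 2 < y"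
      using that E True by auto
    then have "eventually (\<lambda>k. u k x < (x + y) / 2) sequentially"
      and "eventually (\<lambda>k. (x + y) / 2 < u k y) sequentially"
      using order_tendstoD(2)[OF u_lim] order_tendstoD(1)[OF u_lim] by blast+
    then show ?thesis
      by eventually_elim simp
  qed auto
  have row: "eventually (\<lambda>k. \<forall>y\<in>E. x \<le> y \<longrightarrow> u k x \<le> u k y) sequentially" if "x \<in> E" for x
    by (rule eventually_ball_finite[OF \<open>finite E\<close>]) (use pairwise that in blast)
  have "eventually (\<lambda>k. \<forall>x\<in>E. \<forall>y\<in>E. x \<le> y \<longrightarrow> u k x \<le> u k y) sequentially"
    by (rule eventually_ball_finite[OF \<open>finite E\<close>]) (use row in blast)
  then show ?thesis
  proof eventually_elim
    case (elim k)
    then show ?case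
      using u_unit unfolding E_def by (intro nonoverlapping_family_mono_image[OF ab]) (auto simp: mono_on_def)
  qed
qed

lemma dense_approximating_sequence:
  fixes G :: "real set"
  assumes "\<And>x e. x \<in> {0..1} \<Longrightarrow> 0 < e \<Longrightarrow> \<exists>y\<in>G. \<bar>y - x\<bar> < e"
  obtains u where "\<And>k x. x \<in> {0..1} \<Longrightarrow> u k x \<in> G"
    and "\<And>x. x \<in> {0..1} \<Longrightarrow> (\<lambda>k. u k x) \<longlonglongrightarrow> x"
proof -
  define u where "u k x = (SOME y. y \<in> G \<and> \<bar>y - x\<bar> < inverse (real (Suc k)))" for k x
  have u: "u k x \<in> G \<and> \<bar>u k x - x\<bar> < inverse (real (Suc k))" if "x \<in> {0..1}" for k x
    unfolding u_def by (rule someI_ex) (use assms[OF that, of "inverse (real (Suc k))"] in auto)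
  have "(\<lambda>k. u k x) \<longlonglongrightarrow> x" if "x \<in> {0..1}" for x
  proof -
    have "(\<lambda>k. u k x - x) \<longlonglongrightarrow> 0"
      by (rule Lim_null_comparison[OF always_eventually LIMSEQ_inverse_real_of_nat])
        (use u[OF that] in \<open>auto intro!: less_imp_le\<close>)
    then show ?thesis
      by (simp add: LIM_zero_iff)
  qed
  then show ?thesis
    using that u by blast
qed

text \<open>Move every endpoint to a nearby point of \<open>G\<close>: for points close enough the moved
  family is still nonoverlapping, and by continuity of \<open>f\<close> its p-sum is close to the original.\<close>

lemma psums_le_if_dense_le:
  fixes f :: "real \<Rightarrow> real" and G :: "real set"
  assumes cont: "continuous_on {0..1} f" and "0 < p"
    and G: "G \<subseteq> {0..1}"
    and dense: "\<And>x e. x \<in> {0..1} \<Longrightarrow> 0 < e \<Longrightarrow> \<exists>y\<in>G. \<bar>y - x\<bar> < e"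
    and bound: "\<And>a b. nonoverlapping_family n a b \<Longrightarrow> (\<And>j. j < n \<Longrightarrow> a j \<in> G \<and> b j \<in> G) \<Longrightarrow>
      (\<Sum>j<n. \<bar>f (b j) - f (a j)\<bar> powr p) \<le> B"
    and "s \<in> psums p n f"
  shows "s \<le> B"
proof -
  obtain a b where ab: "nonoverlapping_family n a b"
    and s: "s = (\<Sum>j<n. \<bar>f (b j) - f (a j)\<bar> powr p)"
    using \<open>s \<in> psums p n f\<close> unfolding psums_def by blast
  have unit: "a j \<in> {0..1}" "b j \<in> {0..1}" if "j < n" for j
    using ab that unfolding nonoverlapping_family_def by auto
  obtain u where u: "\<And>k x. x \<in> {0..1} \<Longrightarrow> u k x \<in> G"
    and u_lim: "\<And>x. x \<in> {0..1} \<Longrightarrow> (\<lambda>k. u k x) \<longlonglongrightarrow> x"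
    using dense_approximating_sequence[OF dense] by blast
  have u_unit: "u k x \<in> {0..1}" if "x \<in> {0..1}" for k x
    using u[OF that] G by blast
  have "eventually (\<lambda>k. nonoverlapping_family n (\<lambda>j. u k (a j)) (\<lambda>j. u k (b j))) sequentially"
    by (rule eventually_nonoverlapping_family[OF ab]) (use u_unit u_lim in auto)
  then have bounded: "eventually (\<lambda>k. (\<Sum>j<n. \<bar>f (u k (b j)) - f (u k (a j))\<bar> powr p) \<le> B) sequentially"
  proof eventually_elim
    case (elim k)
    moreover have "u k (a j) \<in> G \<and> u k (b j) \<in> G" if "j < n" for j
      using u unit that by blast
    ultimately show ?case
      by (rule bound)
  qed
  have "(\<lambda>k. \<Sum>j<n. \<bar>f (u k (b j)) - f (u k (a j))\<bar> powr p) \<longlonglongrightarrow> s"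
    unfolding s
  proof (intro tendsto_sum tendsto_powr')
    fix j assume "j \<in> {..<n}"
    then have "(\<lambda>k. f (u k x)) \<longlonglongrightarrow> f x" if "x \<in> {a j, b j}" for x
      using that unit u_unit by (intro continuous_on_tendsto_compose[OF cont u_lim]) auto
    then show "(\<lambda>k. \<bar>f (u k (b j)) - f (u k (a j))\<bar>) \<longlonglongrightarrow> \<bar>f (b j) - f (a j)\<bar>"
      by (intro tendsto_intros) auto
  qed (use \<open>0 < p\<close> in auto)
  then show "s \<le> B"
    using bounded by (rule tendsto_upperbound) simp
qed

lemma psum_le_psum_of_close:
  fixes f g :: "real \<Rightarrow> real"
  assumes "0 \<le> p" and close: "\<And>j. j < n \<Longrightarrow> \<bar>f (a j) - g (a j)\<bar> \<le> L \<and> \<bar>f (b j) - g (b j)\<bar> \<le> L"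
  shows "(\<Sum>j<n. \<bar>f (b j) - f (a j)\<bar> powr p)
    \<le> 2 powr p * ((\<Sum>j<n. \<bar>g (b j) - g (a j)\<bar> powr p) + real n * (2 * L) powr p)"
proof -
  have "\<bar>f (b j) - f (a j)\<bar> powr p \<le> 2 powr p * (\<bar>g (b j) - g (a j)\<bar> powr p + (2 * L) powr p)"
    if "j < n" for j
  proof -
    have "\<bar>f (b j) - f (a j)\<bar> \<le> \<bar>g (b j) - g (a j)\<bar> + 2 * L"
      using close[OF that] by linarith
    then have "\<bar>f (b j) - f (a j)\<bar> powr p \<le> (\<bar>g (b j) - g (a j)\<bar> + 2 * L) powr p"
      using \<open>0 \<le> p\<close> by (intro powr_mono2) auto
    also have "\<dots> \<le> 2 powr p * (\<bar>g (b j) - g (a j)\<bar> powr p + (2 * L) powr p)"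
      using close[OF that] \<open>0 \<le> p\<close> by (intro powr_add_le_two_powr) auto
    finally show ?thesis .
  qed
  then have "(\<Sum>j<n. \<bar>f (b j) - f (a j)\<bar> powr p)
      \<le> (\<Sum>j<n. 2 powr p * (\<bar>g (b j) - g (a j)\<bar> powr p + (2 * L) powr p))"
    by (intro sum_mono) simp
  also have "\<dots> = 2 powr p * ((\<Sum>j<n. \<bar>g (b j) - g (a j)\<bar> powr p) + real n * (2 * L) powr p)"
    by (simp add: sum_distrib_left[symmetric] sum.distrib)
  finally show ?thesis .
qed

lemma psums_Sup_le_BVp_Linf:
  fixes f g :: "real \<Rightarrow> real"
  assumes cont: "continuous_on {0..1} f" and "0 < p" and g: "g \<in> BVp p"
  shows "Sup (psums p n f)
    \<le> 2 powr p * (Sup (\<Union>m. psums p m g) + real n * (2 * Linf_norm (\<lambda>x. f x - g x)) powr p)"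
proof -
  define L where "L = Linf_norm (\<lambda>x. f x - g x)"
  obtain M where M: "\<And>x. x \<in> {0..1} \<Longrightarrow> \<bar>f x - g x\<bar> \<le> M"
    using continuous_minus_BVp_bounded[OF cont g \<open>0 < p\<close>] by blast
  have AE: "AE x in lebesgue. x \<in> {0..1} \<longrightarrow> \<bar>f x - g x\<bar> \<le> L"
    unfolding L_def by (rule AE_abs_le_Linf_norm) (rule M)
  define G where "G = {x \<in> {0..1}. \<bar>f x - g x\<bar> \<le> L}"
  show ?thesis
    unfolding L_def[symmetric]
  proof (rule cSup_least)
    show "psums p n f \<noteq> {}"
      using zero_in_psums by blast
  next
    fix s assume "s \<in> psums p n f"
    show "s \<le> 2 powr p * (Sup (\<Union>m. psums p m g) + real n * (2 * L) powr p)"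
    proof (rule psums_le_if_dense_le[OF cont \<open>0 < p\<close>])
      show "G \<subseteq> {0..1}"
        unfolding G_def by blast
      show "\<exists>y\<in>G. \<bar>y - x\<bar> < e" if "x \<in> {0..1}" "0 < e" for x e
        using AE_on_unit_interval_exists_near[OF AE that] unfolding G_def by auto
    next
      fix a b assume ab: "nonoverlapping_family n a b" and in_G: "\<And>j. j < n \<Longrightarrow> a j \<in> G \<and> b j \<in> G"
      have "\<bar>f (a j) - g (a j)\<bar> \<le> L \<and> \<bar>f (b j) - g (b j)\<bar> \<le> L" if "j < n" for j
        using in_G[OF that] unfolding G_def by blast
      then have "(\<Sum>j<n. \<bar>f (b j) - f (a j)\<bar> powr p)
          \<le> 2 powr p * ((\<Sum>j<n. \<bar>g (b j) - g (a j)\<bar> powr p) + real n * (2 * L) powr p)"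
        using \<open>0 < p\<close> by (intro psum_le_psum_of_close) auto
      also have "\<dots> \<le> 2 powr p * (Sup (\<Union>m. psums p m g) + real n * (2 * L) powr p)"
        using psum_in_psums[OF ab] g unfolding BVp_def by (intro mult_left_mono add_right_mono cSup_upper) auto
      finally show "(\<Sum>j<n. \<bar>f (b j) - f (a j)\<bar> powr p)
          \<le> 2 powr p * (Sup (\<Union>m. psums p m g) + real n * (2 * L) powr p)" .
    qed fact
  qed
qed

lemma modulus_pvar_le_pvar_Linf:
  fixes f g :: "real \<Rightarrow> real"
  assumes cont: "continuous_on {0..1} f" and "1 \<le> p" and g: "g \<in> BVp p"
  shows "modulus_pvar p n f \<le> 4 * pvar p g + 8 * real n powr (1/p) * Linf_norm (\<lambda>x. f x - g x)"
proof -
  have "0 < p"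
    using \<open>1 \<le> p\<close> by simp
  define L where "L = Linf_norm (\<lambda>x. f x - g x)"
  define Sg where "Sg = Sup (\<Union>m. psums p m g)"
  define Y where "Y = real n * (2 * L) powr p"
  obtain M where "\<And>x. x \<in> {0..1} \<Longrightarrow> \<bar>f x - g x\<bar> \<le> M"
    using continuous_minus_BVp_bounded[OF cont g \<open>0 < p\<close>] by blast
  then have "0 \<le> L"
    unfolding L_def by (rule Linf_norm_nonneg)
  have "0 \<le> Sup (psums p n f)"
    using bdd_above_psums[OF cont] \<open>0 < p\<close> zero_in_psums by (intro cSup_upper) auto
  have "0 \<le> Sg"
    unfolding Sg_def using g zero_in_psums[of p 0 g] unfolding BVp_def by (intro cSup_upper) auto
  have "modulus_pvar p n f = Sup (psums p n f) powr (1/p)"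
    unfolding modulus_pvar_def ..
  also have "\<dots> \<le> (2 powr p * (Sg + Y)) powr (1/p)"
    using psums_Sup_le_BVp_Linf[OF cont \<open>0 < p\<close> g, of n] \<open>0 \<le> Sup (psums p n f)\<close> \<open>0 < p\<close>
    unfolding Sg_def Y_def L_def by (intro powr_mono2) auto
  also have "\<dots> = 2 * (Sg + Y) powr (1/p)"
    using \<open>0 < p\<close> \<open>0 \<le> Sg\<close> \<open>0 \<le> L\<close> by (simp add: Y_def powr_mult powr_powr)
  also have "\<dots> \<le> 2 * (2 * (Sg powr (1/p) + Y powr (1/p)))"
    using powr_one_div_add_le[OF \<open>0 \<le> Sg\<close> _ \<open>1 \<le> p\<close>, of Y] \<open>0 \<le> L\<close> by (simp add: Y_def)
  also have "Y powr (1/p) = real n powr (1/p) * (2 * L)"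
    unfolding Y_def using \<open>0 < p\<close> \<open>0 \<le> L\<close> by (simp add: powr_mult powr_powr)
  also have "Sg powr (1/p) = pvar p g"
    unfolding Sg_def pvar_def ..
  finally show ?thesis
    unfolding L_def by (simp add: algebra_simps)
qed

lemma modulus_pvar_le_K_func:
  assumes cont: "continuous_on {0..1} f" and "1 \<le> p" "0 < t"
    and small: "t * real n powr (1/p) \<le> 1"
  shows "t * modulus_pvar p n f \<le> 8 * K_func p f t"
proof -
  have "t * modulus_pvar p n f / 8 \<le> K_func p f t"
    unfolding K_func_def
  proof (rule cInf_greatest)
    show "{Linf_norm (\<lambda>x. f x - g x) + t * pvar p g | g. g \<in> BVp p} \<noteq> {}"
      using const_in_BVp by blast
  next
    fix e assume "e \<in> {Linf_norm (\<lambda>x. f x - g x) + t * pvar p g | g. g \<in> BVp p}"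
    then obtain g where g: "g \<in> BVp p" and e: "e = Linf_norm (\<lambda>x. f x - g x) + t * pvar p g"
      by blast
    define L where "L = Linf_norm (\<lambda>x. f x - g x)"
    obtain M where "\<And>x. x \<in> {0..1} \<Longrightarrow> \<bar>f x - g x\<bar> \<le> M"
      using continuous_minus_BVp_bounded[OF cont g] \<open>1 \<le> p\<close> by auto
    then have "0 \<le> L"
      unfolding L_def by (rule Linf_norm_nonneg)
    have "t * modulus_pvar p n f \<le> t * (4 * pvar p g + 8 * real n powr (1/p) * L)"
      using modulus_pvar_le_pvar_Linf[OF cont \<open>1 \<le> p\<close> g, of n] \<open>0 < t\<close>
      unfolding L_def by (intro mult_left_mono) auto
    also have "\<dots> = 4 * (t * pvar p g) + 8 * (t * real n powr (1/p)) * L"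
      by (simp add: algebra_simps)
    also have "\<dots> \<le> 4 * (t * pvar p g) + 8 * L"
      using mult_right_mono[OF small \<open>0 \<le> L\<close>] by linarith
    also have "\<dots> \<le> 8 * e"
      using \<open>0 < t\<close> unfolding e L_def[symmetric] pvar_def by simp
    finally show "t * modulus_pvar p n f / 8 \<le> e"
      by simp
  qed
  then show ?thesis
    by simp
qed

section \<open>Upper bound\<close>

definition exits_by :: "(real \<Rightarrow> real) \<Rightarrow> real \<Rightarrow> real \<Rightarrow> bool" where
  "exits_by f d x \<longleftrightarrow> x \<in> {0..1} \<and> (\<exists>y\<in>{x..1}. d \<le> \<bar>f y - f x\<bar>)"

definition first_exit :: "(real \<Rightarrow> real) \<Rightarrow> real \<Rightarrow> real \<Rightarrow> real" where
  "first_exit f d x = Inf {y \<in> {x..1}. d \<le> \<bar>f y - f x\<bar>}"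

lemma first_exit:
  assumes cont: "continuous_on {0..1} f" and "0 < d" and "exits_by f d x"
  shows "x < first_exit f d x" "first_exit f d x \<le> 1"
    "d \<le> \<bar>f (first_exit f d x) - f x\<bar>"
    "\<And>y. x \<le> y \<Longrightarrow> y < first_exit f d x \<Longrightarrow> \<bar>f y - f x\<bar> < d"
proof -
  define A where "A = {y \<in> {x..1}. d \<le> \<bar>f y - f x\<bar>}"
  have "x \<in> {0..1}" "A \<noteq> {}"
    using \<open>exits_by f d x\<close> unfolding exits_by_def A_def by auto
  have "continuous_on {x..1} (\<lambda>y. \<bar>f y - f x\<bar>)"
    using \<open>x \<in> {0..1}\<close> by (intro continuous_intros continuous_on_subset[OF cont]) auto
  then have "closed A"
    unfolding A_def using continuous_on_closed_Collect_le[OF continuous_on_const] by blast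
  moreover have "bdd_below A"
    unfolding A_def by (auto intro: bdd_belowI[of _ x])
  ultimately have "Inf A \<in> A"
    using closed_contains_Inf \<open>A \<noteq> {}\<close> by blast
  moreover have "first_exit f d x = Inf A"
    unfolding first_exit_def A_def ..
  ultimately have mem: "first_exit f d x \<in> A"
    by simp
  then show "first_exit f d x \<le> 1" "d \<le> \<bar>f (first_exit f d x) - f x\<bar>"
    unfolding A_def by auto
  show "x < first_exit f d x"
    using mem \<open>0 < d\<close> unfolding A_def by (cases "first_exit f d x = x") auto
  fix y assume "x \<le> y" "y < first_exit f d x"
  then have "y \<notin> A"
    using cInf_lower[OF _ \<open>bdd_below A\<close>] \<open>first_exit f d x = Inf A\<close> by force
  then show "\<bar>f y - f x\<bar> < d"
    using \<open>x \<le> y\<close> \<open>y < first_exit f d x\<close> \<open>first_exit f d x \<le> 1\<close> unfolding A_def by auto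
qed

lemma first_exit_stops:
  assumes cont: "continuous_on {0..1} f" and "0 < d"
    and no_chain: "\<not> (\<exists>a b. nonoverlapping_family N a b \<and> (\<forall>j<N. d \<le> \<bar>f (b j) - f (a j)\<bar>))"
  shows "\<exists>k<N. \<not> exits_by f d ((first_exit f d ^^ k) 0)"
proof (rule ccontr)
  define X where "X k = (first_exit f d ^^ k) 0" for k
  assume "\<not> (\<exists>k<N. \<not> exits_by f d ((first_exit f d ^^ k) 0))"
  then have exits: "exits_by f d (X k)" if "k < N" for k
    using that unfolding X_def by blast
  have X_Suc: "X (Suc k) = first_exit f d (X k)" for k
    unfolding X_def by simp
  note step = first_exit[OF cont \<open>0 < d\<close> exits, folded X_Suc]
  have "nonoverlapping_family N X (\<lambda>k. X (Suc k))"
  proof (rule nonoverlapping_family_chain)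
    fix k assume "k < N"
    then show "0 \<le> X k \<and> X k \<le> X (Suc k) \<and> X (Suc k) \<le> 1"
      using exits[of k] step[of k] unfolding exits_by_def by auto
  qed
  moreover have "\<forall>j<N. d \<le> \<bar>f (X (Suc j)) - f (X j)\<bar>"
    using step by blast
  ultimately show False
    using no_chain by blast
qed

lemma greedy_partition:
  fixes f :: "real \<Rightarrow> real"
  assumes cont: "continuous_on {0..1} f" and "0 < d"
    and no_chain: "\<not> (\<exists>a b. nonoverlapping_family N a b \<and> (\<forall>j<N. d \<le> \<bar>f (b j) - f (a j)\<bar>))"
  obtains X K where "K < N" "X 0 = 0" "mono_on {..K} X" "X K \<le> 1"
    "\<And>k y. k < K \<Longrightarrow> X k \<le> y \<Longrightarrow> y < X (Suc k) \<Longrightarrow> \<bar>f y - f (X k)\<bar> < d"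
    "\<And>y. X K \<le> y \<Longrightarrow> y \<le> 1 \<Longrightarrow> \<bar>f y - f (X K)\<bar> < d"
proof -
  define X where "X k = (first_exit f d ^^ k) 0" for k
  obtain k0 where "k0 < N" "\<not> exits_by f d (X k0)"
    using first_exit_stops[OF cont \<open>0 < d\<close> no_chain] unfolding X_def by blast
  define K where "K = (LEAST k. \<not> exits_by f d (X k))"
  have "\<not> exits_by f d (X K)"
    unfolding K_def by (rule LeastI[of _ k0]) fact
  have "K < N"
    using Least_le[of "\<lambda>k. \<not> exits_by f d (X k)" k0] \<open>\<not> exits_by f d (X k0)\<close> \<open>k0 < N\<close>
    unfolding K_def by simp
  have exits: "exits_by f d (X k)" if "k < K" for k
    using not_less_Least[of k "\<lambda>k. \<not> exits_by f d (X k)"] that unfolding K_def by blast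
  have X_Suc: "X (Suc k) = first_exit f d (X k)" for k
    unfolding X_def by simp
  note step = first_exit[OF cont \<open>0 < d\<close> exits, folded X_Suc]
  have "X K \<in> {0..1}"
  proof (cases K)
    case 0
    then show ?thesis
      unfolding X_def by simp
  next
    case (Suc k)
    then show ?thesis
      using step[of k] exits[of k] unfolding exits_by_def by auto
  qed
  show thesis
  proof
    show "K < N" "X K \<le> 1"
      using \<open>K < N\<close> \<open>X K \<in> {0..1}\<close> by simp_all
    show "X 0 = 0"
      unfolding X_def by simp
    show "mono_on {..K} X"
      using step by (intro mono_on_atMost_if_le_Suc) (simp add: less_imp_le)
    show "\<bar>f y - f (X k)\<bar> < d" if "k < K" "X k \<le> y" "y < X (Suc k)" for k y
      using step(4) that by blast
    show "\<bar>f y - f (X K)\<bar> < d" if "X K \<le> y" "y \<le> 1" for y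
      using \<open>\<not> exits_by f d (X K)\<close> \<open>X K \<in> {0..1}\<close> that unfolding exits_by_def by force
  qed
qed

text \<open>With \<open>X 0 = 0 \<le> X 1 \<le> \<dots> \<le> X K\<close>, the step function \<open>\<lambda>y. f (X (step_index X K y))\<close>
  equals \<open>f (X k)\<close> on \<open>[X k, X (k+1))\<close> and \<open>f (X K)\<close> on \<open>[X K, 1]\<close>.\<close>

definition step_index :: "(nat \<Rightarrow> real) \<Rightarrow> nat \<Rightarrow> real \<Rightarrow> nat" where
  "step_index X K y = Max {k. k \<le> K \<and> X k \<le> y}"

lemma step_index:
  assumes "X 0 \<le> y"
  shows "step_index X K y \<le> K" "X (step_index X K y) \<le> y"
    "step_index X K y < K \<Longrightarrow> y < X (Suc (step_index X K y))"
proof -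
  have fin: "finite {k. k \<le> K \<and> X k \<le> y}"
    by simp
  have "0 \<in> {k. k \<le> K \<and> X k \<le> y}"
    using assms by simp
  then have "step_index X K y \<in> {k. k \<le> K \<and> X k \<le> y}"
    unfolding step_index_def using Max_in[OF fin] by blast
  then show "step_index X K y \<le> K" "X (step_index X K y) \<le> y"
    by simp_all
  assume "step_index X K y < K"
  show "y < X (Suc (step_index X K y))"
  proof (rule ccontr)
    assume "\<not> y < X (Suc (step_index X K y))"
    with \<open>step_index X K y < K\<close> have "Suc (step_index X K y) \<in> {k. k \<le> K \<and> X k \<le> y}"
      by simp
    then show False
      using Max_ge[OF fin] unfolding step_index_def by fastforce
  qed
qed

lemma step_index_mono:
  assumes "X 0 \<le> y" "y \<le> z"
  shows "step_index X K y \<le> step_index X K z"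
  unfolding step_index_def using assms by (intro Max_mono) auto

lemma step_function_approx:
  assumes "X 0 = 0" "y \<in> {0..1}"
    and between: "\<And>k y. k < K \<Longrightarrow> X k \<le> y \<Longrightarrow> y < X (Suc k) \<Longrightarrow> \<bar>f y - f (X k)\<bar> < d"
    and last: "\<And>y. X K \<le> y \<Longrightarrow> y \<le> 1 \<Longrightarrow> \<bar>f y - f (X K)\<bar> < d"
  shows "\<bar>f y - f (X (step_index X K y))\<bar> < d"
proof -
  have "X 0 \<le> y"
    using assms(1,2) by simp
  note index = step_index[of X y K, OF this]
  show ?thesis
  proof (cases "step_index X K y < K")
    case True
    then show ?thesis
      using between index by blast
  next
    case False
    then have "step_index X K y = K"
      using index(1) by simp
    then show ?thesis
      using last index(2) \<open>y \<in> {0..1}\<close> by auto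
  qed
qed

lemma card_increasing_intervals_le:
  fixes \<sigma> :: "real \<Rightarrow> nat"
  assumes ab: "nonoverlapping_family n a b" and "mono_on {0..1} \<sigma>"
    and le_K: "\<And>y. y \<in> {0..1} \<Longrightarrow> \<sigma> y \<le> K"
  shows "card {j. j < n \<and> \<sigma> (a j) < \<sigma> (b j)} \<le> K"
proof -
  define J where "J = {j. j < n \<and> \<sigma> (a j) < \<sigma> (b j)}"
  have unit: "a j \<in> {0..1}" "b j \<in> {0..1}" if "j < n" for j
    using ab that unfolding nonoverlapping_family_def by auto
  have "inj_on (\<lambda>j. \<sigma> (a j)) J"
  proof (rule inj_onI)
    fix i j assume "i \<in> J" "j \<in> J" "\<sigma> (a i) = \<sigma> (a j)"
    show "i = j"
    proof (rule ccontr)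
      assume "i \<noteq> j"
      then have "b i \<le> a j \<or> b j \<le> a i"
        using ab \<open>i \<in> J\<close> \<open>j \<in> J\<close> unfolding nonoverlapping_family_def J_def by auto
      then have "\<sigma> (b i) \<le> \<sigma> (a j) \<or> \<sigma> (b j) \<le> \<sigma> (a i)"
        using mono_onD[OF \<open>mono_on {0..1} \<sigma>\<close>] unit \<open>i \<in> J\<close> \<open>j \<in> J\<close> unfolding J_def by blast
      then show False
        using \<open>i \<in> J\<close> \<open>j \<in> J\<close> \<open>\<sigma> (a i) = \<sigma> (a j)\<close> unfolding J_def by auto
    qed
  qed
  moreover have "(\<lambda>j. \<sigma> (a j)) ` J \<subseteq> {..<K}"
    using le_K unit unfolding J_def by (auto intro: less_le_trans)
  ultimately show ?thesis
    unfolding J_def[symmetric] using card_inj_on_le[of _ J "{..<K}"] by fastforce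
qed

text \<open>Intervals inside one step contribute nothing; on each of the at most \<open>K\<close> others, the
  increment of the step function is an increment of \<open>f\<close> between two partition points.\<close>

lemma psums_step_function_subset:
  assumes "X 0 = 0" "mono_on {..K} X" "X K \<le> 1" "K \<le> N"
  shows "psums p n (\<lambda>y. f (X (step_index X K y))) \<subseteq> psums p N f"
proof
  fix s assume "s \<in> psums p n (\<lambda>y. f (X (step_index X K y)))"
  then obtain a b where ab: "nonoverlapping_family n a b"
    and s: "s = (\<Sum>j<n. \<bar>f (X (step_index X K (b j))) - f (X (step_index X K (a j)))\<bar> powr p)"
    unfolding psums_def by blast
  define \<sigma> where "\<sigma> = step_index X K"
  define J where "J = {j. j < n \<and> \<sigma> (a j) < \<sigma> (b j)}"
  have unit: "a j \<in> {0..1}" "b j \<in> {0..1}" "a j \<le> b j" if "j < n" for j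
    using ab that unfolding nonoverlapping_family_def by auto
  have \<sigma>_le: "\<sigma> y \<le> K" if "y \<in> {0..1}" for y
    using step_index(1)[of X y K] that \<open>X 0 = 0\<close> unfolding \<sigma>_def by simp
  have \<sigma>_mono: "mono_on {0..1} \<sigma>"
    using step_index_mono[of X _ _ K] \<open>X 0 = 0\<close> unfolding \<sigma>_def by (intro mono_onI) simp
  have X_mono: "X i \<le> X k" if "i \<le> k" "k \<le> K" for i k
    using mono_onD[OF \<open>mono_on {..K} X\<close>, of i k] that by simp
  have image_family: "nonoverlapping_family n (\<lambda>j. X (\<sigma> (a j))) (\<lambda>j. X (\<sigma> (b j)))"
  proof (rule nonoverlapping_family_mono_image[OF ab])
    show "X (\<sigma> y) \<in> {0..1}" if "y \<in> {0..1}" for y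
      using X_mono[of 0 "\<sigma> y"] X_mono[of "\<sigma> y" K] \<sigma>_le[OF that] \<open>X 0 = 0\<close> \<open>X K \<le> 1\<close> by simp
    show "mono_on (a ` {..<n} \<union> b ` {..<n}) (\<lambda>y. X (\<sigma> y))"
      using unit \<sigma>_le mono_onD[OF \<sigma>_mono] X_mono by (auto intro!: mono_onI)
  qed
  have "card J \<le> N"
    using card_increasing_intervals_le[OF ab \<sigma>_mono \<sigma>_le] \<open>K \<le> N\<close> unfolding J_def by simp
  have "s = (\<Sum>j\<in>J. \<bar>f (X (\<sigma> (b j))) - f (X (\<sigma> (a j)))\<bar> powr p)"
    unfolding s \<sigma>_def[symmetric]
  proof (rule sum.mono_neutral_right)
    show "\<forall>j\<in>{..<n} - J. \<bar>f (X (\<sigma> (b j))) - f (X (\<sigma> (a j)))\<bar> powr p = 0"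
    proof
      fix j assume "j \<in> {..<n} - J"
      then have "\<sigma> (a j) = \<sigma> (b j)"
        using mono_onD[OF \<sigma>_mono, of "a j" "b j"] unit[of j] unfolding J_def by force
      then show "\<bar>f (X (\<sigma> (b j))) - f (X (\<sigma> (a j)))\<bar> powr p = 0"
        by simp
    qed
  qed (auto simp: J_def)
  then show "s \<in> psums p N f"
    using psum_subfamily_in_psums[OF image_family _ \<open>card J \<le> N\<close>] unfolding J_def by auto
qed

lemma exists_BVp_approx:
  fixes f :: "real \<Rightarrow> real"
  assumes cont: "continuous_on {0..1} f" and "0 < d" "0 < p"
    and few_jumps: "Sup (psums p N f) < real N * d powr p"
  shows "\<exists>g\<in>BVp p. (\<forall>x\<in>{0..1}. \<bar>f x - g x\<bar> \<le> d) \<and> Sup (\<Union>n. psums p n g) \<le> Sup (psums p N f)"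
proof -
  have bdd: "bdd_above (psums p N f)"
    using bdd_above_psums[OF cont] \<open>0 < p\<close> by simp
  have "\<not> (\<exists>a b. nonoverlapping_family N a b \<and> (\<forall>j<N. d \<le> \<bar>f (b j) - f (a j)\<bar>))"
  proof
    assume "\<exists>a b. nonoverlapping_family N a b \<and> (\<forall>j<N. d \<le> \<bar>f (b j) - f (a j)\<bar>)"
    then obtain a b where ab: "nonoverlapping_family N a b" and jumps: "\<forall>j<N. d \<le> \<bar>f (b j) - f (a j)\<bar>"
      by blast
    have "real N * d powr p = (\<Sum>j<N. d powr p)"
      by simp
    also have "\<dots> \<le> (\<Sum>j<N. \<bar>f (b j) - f (a j)\<bar> powr p)"
      using jumps \<open>0 < d\<close> \<open>0 < p\<close> by (intro sum_mono powr_mono2) auto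
    also have "\<dots> \<le> Sup (psums p N f)"
      using psum_in_psums[OF ab] bdd by (rule cSup_upper)
    finally show False
      using few_jumps by simp
  qed
  then obtain X K where X: "K < N" "X 0 = 0" "mono_on {..K} X" "X K \<le> 1"
    and between: "\<And>k y. k < K \<Longrightarrow> X k \<le> y \<Longrightarrow> y < X (Suc k) \<Longrightarrow> \<bar>f y - f (X k)\<bar> < d"
    and last: "\<And>y. X K \<le> y \<Longrightarrow> y \<le> 1 \<Longrightarrow> \<bar>f y - f (X K)\<bar> < d"
    using greedy_partition[OF cont \<open>0 < d\<close>] by metis
  define g where "g y = f (X (step_index X K y))" for y
  have "psums p n g \<subseteq> psums p N f" for n
    unfolding g_def using \<open>K < N\<close> by (intro psums_step_function_subset[OF X(2,3,4)]) simp
  then have sub: "(\<Union>n. psums p n g) \<subseteq> psums p N f"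
    by blast
  then have "g \<in> BVp p"
    unfolding BVp_def using bdd_above_mono[OF bdd sub] by simp
  moreover have "\<bar>f x - g x\<bar> \<le> d" if "x \<in> {0..1}" for x
    using step_function_approx[of X x K f d, OF X(2) that between last] unfolding g_def by simp
  moreover have "Sup (\<Union>n. psums p n g) \<le> Sup (psums p N f)"
    using sub zero_in_psums[of p 0 g] bdd by (intro cSup_subset_mono) auto
  ultimately show ?thesis
    by blast
qed

lemma K_func_le_of_Sup_psums_less:
  assumes cont: "continuous_on {0..1} f" and "0 < p" "0 \<le> t" "0 < d"
    and "Sup (psums p n f) < real n * d powr p"
  shows "K_func p f t \<le> d + t * modulus_pvar p n f"
proof -
  obtain g where g: "g \<in> BVp p" "\<forall>x\<in>{0..1}. \<bar>f x - g x\<bar> \<le> d"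
    and var_g: "Sup (\<Union>m. psums p m g) \<le> Sup (psums p n f)"
    using exists_BVp_approx[OF cont \<open>0 < d\<close> \<open>0 < p\<close> assms(5)] by blast
  have "Linf_norm (\<lambda>x. f x - g x) \<le> d"
    using g(2) \<open>0 < d\<close> by (intro Linf_norm_le) auto
  moreover have "pvar p g \<le> modulus_pvar p n f"
  proof -
    have "0 \<le> Sup (\<Union>m. psums p m g)"
      using g(1) zero_in_psums[of p 0 g] unfolding BVp_def by (intro cSup_upper) auto
    then show ?thesis
      unfolding pvar_def modulus_pvar_def using var_g \<open>0 < p\<close> by (intro powr_mono2) auto
  qed
  then have "t * pvar p g \<le> t * modulus_pvar p n f"
    using \<open>0 \<le> t\<close> by (rule mult_left_mono)
  ultimately show ?thesis
    using K_func_le[OF cont \<open>0 < p\<close> \<open>0 \<le> t\<close> g(1)] by linarith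
qed

lemma K_func_le_modulus_pvar:
  assumes cont: "continuous_on {0..1} f" and "1 \<le> p" "0 < t"
    and large: "1 \<le> 4 * t * real n powr (1/p)"
  shows "K_func p f t \<le> 9 * t * modulus_pvar p n f"
proof -
  define V where "V = modulus_pvar p n f"
  have "0 < p"
    using \<open>1 \<le> p\<close> by simp
  have "0 \<le> Sup (psums p n f)"
    using bdd_above_psums[OF cont] \<open>0 < p\<close> zero_in_psums by (intro cSup_upper) auto
  then have V_powr: "V powr p = Sup (psums p n f)"
    unfolding V_def modulus_pvar_def using \<open>0 < p\<close> by (simp add: powr_powr)
  have "0 \<le> 8 * t * V"
    using \<open>0 < t\<close> unfolding V_def modulus_pvar_def by simp
  have "0 < n"
    using large by (cases n) auto
  have "K_func p f t \<le> 9 * t * V + e" if "0 < e" for e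
  proof -
    have "1 \<le> 8 * t * real n powr (1/p)"
      using large by linarith
    then have "V \<le> 8 * t * real n powr (1/p) * V"
      using mult_right_mono[of 1 _ V] \<open>0 \<le> 8 * t * V\<close> \<open>0 < t\<close> by (simp add: zero_le_mult_iff)
    then have "Sup (psums p n f) \<le> (8 * t * real n powr (1/p) * V) powr p"
      unfolding V_powr[symmetric] using \<open>0 \<le> 8 * t * V\<close> \<open>0 < p\<close> \<open>0 < t\<close>
      by (intro powr_mono2) (auto simp: zero_le_mult_iff)
    also have "\<dots> = real n * (8 * t * V) powr p"
      using \<open>0 < t\<close> \<open>0 \<le> 8 * t * V\<close> \<open>0 < p\<close>
      by (simp add: powr_mult powr_powr mult.commute mult.left_commute)
    also have "\<dots> < real n * (8 * t * V + e) powr p"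
      using \<open>0 < n\<close> \<open>0 < p\<close> \<open>0 \<le> 8 * t * V\<close> \<open>0 < e\<close>
      by (intro mult_strict_left_mono powr_less_mono2) auto
    finally have "Sup (psums p n f) < real n * (8 * t * V + e) powr p" .
    moreover have "0 < 8 * t * V + e"
      using \<open>0 \<le> 8 * t * V\<close> \<open>0 < e\<close> by linarith
    ultimately have "K_func p f t \<le> (8 * t * V + e) + t * V"
      using K_func_le_of_Sup_psums_less[OF cont \<open>0 < p\<close> less_imp_le[OF \<open>0 < t\<close>]]
      unfolding V_def by blast
    then show ?thesis
      by (simp add: algebra_simps)
  qed
  then show ?thesis
    unfolding V_def by (rule field_le_epsilon)
qed

section \<open>The number of intervals\<close>

lemma nat_floor_powr_root_bounds:
  fixes m p :: real
  assumes "1 \<le> m" "1 \<le> p"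
  defines "n \<equiv> nat \<lfloor>m powr p\<rfloor>"
  shows "real n powr (1/p) \<le> m" "m < 2 * real n powr (1/p)"
proof -
  have "1 \<le> m powr p"
    using assms by (simp add: ge_one_powr_ge_zero)
  then have "real n \<le> m powr p" "m powr p < real n + 1" "1 \<le> real n"
    unfolding n_def by (linarith, linarith, simp add: one_le_floor)
  have root: "(m powr p) powr (1/p) = m"
    using assms by (simp add: powr_powr)
  show "real n powr (1/p) \<le> m"
    using powr_mono2[of "1/p" "real n" "m powr p"] \<open>real n \<le> m powr p\<close> root \<open>1 \<le> p\<close> by simp
  have "m powr p < 2 * real n"
    using \<open>m powr p < real n + 1\<close> \<open>1 \<le> real n\<close> by linarith
  then have "m < (2 * real n) powr (1/p)"
    using powr_less_mono2[of "1/p" "m powr p" "2 * real n"] root \<open>1 \<le> p\<close> by simp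
  also have "\<dots> = 2 powr (1/p) * real n powr (1/p)"
    by (simp add: powr_mult)
  also have "\<dots> \<le> 2 * real n powr (1/p)"
    using powr_mono[of "1/p" 1 2] \<open>1 \<le> p\<close> by (intro mult_right_mono) auto
  finally show "m < 2 * real n powr (1/p)" .
qed

lemma floor_powr_floor_bounds:
  fixes p t :: real
  assumes "1 \<le> p" "0 < t" "t \<le> 1"
  defines "n \<equiv> nat \<lfloor>real_of_int \<lfloor>1 / t\<rfloor> powr p\<rfloor>"
  shows "t * real n powr (1/p) \<le> 1" "1 \<le> 4 * t * real n powr (1/p)"
proof -
  define m where "m = real_of_int \<lfloor>1 / t\<rfloor>"
  have "1 \<le> m"
    unfolding m_def using assms by (simp add: one_le_floor field_simps)
  have "m \<le> 1 / t" "1 / t < m + 1"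
    unfolding m_def by linarith+
  have "n = nat \<lfloor>m powr p\<rfloor>"
    unfolding n_def m_def ..
  note root_bounds = nat_floor_powr_root_bounds[OF \<open>1 \<le> m\<close> \<open>1 \<le> p\<close>, folded this]
  have "t * real n powr (1/p) \<le> t * m"
    using root_bounds(1) \<open>0 < t\<close> by simp
  also have "t * m \<le> 1"
    using \<open>m \<le> 1 / t\<close> \<open>0 < t\<close> by (simp add: field_simps)
  finally show "t * real n powr (1/p) \<le> 1" .
  have "1 < t * m + t"
    using \<open>1 / t < m + 1\<close> \<open>0 < t\<close> by (simp add: field_simps)
  also have "\<dots> \<le> 2 * t * m"
    using \<open>1 \<le> m\<close> \<open>0 < t\<close> by simp
  also have "\<dots> \<le> 2 * t * (2 * real n powr (1/p))"
    using root_bounds(2) \<open>0 < t\<close> by simp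
  finally show "1 \<le> 4 * t * real n powr (1/p)"
    by simp
qed

theorem theorem4p2:
  fixes p :: real
  assumes "1 \<le> p"
  shows "\<exists>c1 c2. 0 < c1 \<and> c1 \<le> c2 \<and>
    (\<forall>f :: real \<Rightarrow> real. continuous_on {0..1} f \<longrightarrow>
      (\<forall>t::real. 0 < t \<and> t \<le> 1 \<longrightarrow>
        (let n = nat \<lfloor>(real_of_int \<lfloor>1 / t\<rfloor>) powr p\<rfloor> in
          c1 * t * modulus_pvar p n f \<le> K_func p f t \<and>
          K_func p f t \<le> c2 * t * modulus_pvar p n f)))"
proof (rule exI[of _ "1/8"], rule exI[of _ 9], intro conjI allI impI)
  fix f :: "real \<Rightarrow> real" and t :: real
  assume cont: "continuous_on {0..1} f" and t: "0 < t \<and> t \<le> 1"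
  define n where "n = nat \<lfloor>(real_of_int \<lfloor>1 / t\<rfloor>) powr p\<rfloor>"
  have "t * modulus_pvar p n f \<le> 8 * K_func p f t"
    using floor_powr_floor_bounds(1)[OF assms] t unfolding n_def
    by (intro modulus_pvar_le_K_func[OF cont assms]) auto
  moreover have "K_func p f t \<le> 9 * t * modulus_pvar p n f"
    using floor_powr_floor_bounds(2)[OF assms] t unfolding n_def
    by (intro K_func_le_modulus_pvar[OF cont assms]) auto
  ultimately show "let n = nat \<lfloor>(real_of_int \<lfloor>1 / t\<rfloor>) powr p\<rfloor> in
      1/8 * t * modulus_pvar p n f \<le> K_func p f t \<and> K_func p f t \<le> 9 * t * modulus_pvar p n f"
    unfolding n_def Let_def by simp
qed simp_all

end
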